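(* Let $u$ be a bounded nonnegative function on $\mathbb{N}$ and $\mathfrak{N}_u$ the 1D-GWN operator associated with $u$. Then $$\mathfrak{N}_u\Phi=\sum_{k=0}^\infty u(k)\,\mathfrak{a}_k^\dagger\mathfrak{a}_k\Phi,\qquad\Phi\in\mathcal{S}^*(M),$$ where the series converges in the strong topology of $\mathcal{S}^*(M)$.
   Context: Setting: $M$ a discrete-time normal martingale with the chaotic representation property; $Z_0=M_0$, $Z_n=M_n-M_{n-1}$; $\Gamma$ the finite subsets of $\mathbb{N}$, $Z_\emptyset=1$, $Z_\sigma=\prod_{j\in\sigma}Z_j$, an orthonormal basis of $\mathcal{L}^2(M)$. $\lambda_\emptyset=1$, $\lambda_\sigma=\prod_{k\in\sigma}(k+1)$; $\mathcal{S}(M)=\{\xi\in\mathcal{L}^2(M):\sum_\sigma\lambda_\sigma^{2p}|\langle Z_\sigma,\xi\rangle|^2<\infty\ \forall p\ge0\}$ (countably Hilbertian nuclear space), $\mathcal{S}^*(M)$ its dual with the strong topology. Fock transform $\widehat\Phi(\sigma)=\Phi(Z_\sigma)$ (determines $\Phi$); $\mathbf{1}_\sigma$ is the indicator of $\sigma$. The 1D-GWN operator $\mathfrak{N}_u$ is the unique continuous linear operator on $\mathcal{S}^*(M)$ with $\widehat{\mathfrak{N}_u\Phi}(\sigma)=\#_u(\sigma)\widehat\Phi(\sigma)$, $\#_u(\sigma)=\sum_k\mathbf{1}_\sigma(k)u(k)$. For $k\ge0$, $\mathfrak{a}_k,\mathfrak{a}_k^\dagger$ are the continuous linear operators on $\mathcal{S}^*(M)$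 determined by $\widehat{\mathfrak{a}_k\Phi}(\sigma)=(1-\mathbf{1}_\sigma(k))\widehat\Phi(\sigma\cup\{k\})$ and $\widehat{\mathfrak{a}_k^\dagger\Phi}(\sigma)=\mathbf{1}_\sigma(k)\widehat\Phi(\sigma\setminus\{k\})$. *)

theory Defs
  imports "HOL-Analysis.Analysis"
begin

text \<open>Concrete model of the Gel'fand triple S(M) \<subseteq> L^2(M) \<subseteq> S*(M) via the orthonormal
basis Z_sigma (sigma in Gamma): a test functional xi is represented by its coefficient
family sigma \<mapsto> <Z_sigma, xi>, indexed by finite subsets of nat.\<close>

definition Gam :: "nat set set" where
  "Gam = {\<sigma>. finite \<sigma>}"

definition lam :: "nat set \<Rightarrow> real" where
  "lam \<sigma> = (\<Prod>k\<in>\<sigma>. real (k + 1))"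

type_synonym coeff = "nat set \<Rightarrow> complex"
type_synonym gfun = "coeff \<Rightarrow> complex"

definition Stest :: "coeff set" where
  "Stest = {\<xi>. (\<forall>\<sigma>. \<sigma> \<notin> Gam \<longrightarrow> \<xi> \<sigma> = 0) \<and>
               (\<forall>p::nat. (\<lambda>\<sigma>. lam \<sigma> ^ (2 * p) * (cmod (\<xi> \<sigma>))\<^sup>2) summable_on Gam)}"

definition pnorm :: "nat \<Rightarrow> coeff \<Rightarrow> real" where
  "pnorm p \<xi> = sqrt (\<Sum>\<^sub>\<infinity>\<sigma>\<in>Gam. lam \<sigma> ^ (2 * p) * (cmod (\<xi> \<sigma>))\<^sup>2)"

definition Zb :: "nat set \<Rightarrow> coeff" where
  "Zb \<sigma> = (\<lambda>\<tau>. if \<tau> = \<sigma> then 1 else 0)"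

text \<open>Continuity of a linear functional on the countably Hilbertian space S(M) means
boundedness by one of the (increasing) norms ||.||_p.\<close>
definition Sstar :: "gfun set" where
  "Sstar = {\<Phi>. (\<forall>\<xi> \<eta>. \<xi> \<in> Stest \<longrightarrow> \<eta> \<in> Stest \<longrightarrow> \<Phi> (\<lambda>\<sigma>. \<xi> \<sigma> + \<eta> \<sigma>) = \<Phi> \<xi> + \<Phi> \<eta>) \<and>
              (\<forall>c \<xi>. \<xi> \<in> Stest \<longrightarrow> \<Phi> (\<lambda>\<sigma>. c * \<xi> \<sigma>) = c * \<Phi> \<xi>) \<and>
              (\<exists>p C. \<forall>\<xi>\<in>Stest. cmod (\<Phi> \<xi>) \<le> C * pnorm p \<xi>) \<and>
              (\<forall>\<xi>. \<xi> \<notin> Stest \<longrightarrow> \<Phi> \<xi> = 0)}"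

definition fock :: "gfun \<Rightarrow> nat set \<Rightarrow> complex" where
  "fock \<Phi> \<sigma> = \<Phi> (Zb \<sigma>)"

definition bounded_test :: "coeff set \<Rightarrow> bool" where
  "bounded_test B \<longleftrightarrow> B \<subseteq> Stest \<and> (\<forall>p. \<exists>C. \<forall>\<xi>\<in>B. pnorm p \<xi> \<le> C)"

definition strong_conv :: "(nat \<Rightarrow> gfun) \<Rightarrow> gfun \<Rightarrow> bool" where
  "strong_conv F \<Phi> \<longleftrightarrow> (\<forall>B. bounded_test B \<longrightarrow>
      (\<forall>\<epsilon>>0. \<forall>\<^sub>F n in sequentially. \<forall>\<xi>\<in>B. cmod (F n \<xi> - \<Phi> \<xi>) < \<epsilon>))"

definition cnt :: "(nat \<Rightarrow> real) \<Rightarrow> nat set \<Rightarrow> real" where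
  "cnt u \<sigma> = (\<Sum>k\<in>\<sigma>. u k)"

end

theory Submission
  imports Defs
begin

text \<open>The Fock transform of the difference between the n-th partial sum and N_u Phi is
  sigma |-> -(sum of u k over k in sigma with k >= n) * Phi^(sigma). The tail sum vanishes
  unless sigma contains some k >= n, in which case lam sigma >= n + 1; it has at most
  lam sigma terms, each at most sup u. With |Phi^(sigma)| <= C * lam sigma ^ p, the difference is
  therefore O(lam sigma ^ (p + 2) / n).

  A functional whose Fock transform is bounded by eps * lam sigma ^ q is bounded on a test
  function xi by eps * (||xi||_(q+1) ^ 2 + exp (pi^2 / 6)) / 2: apply AM-GM to
  |xi sigma| * lam sigma ^ q = (|xi sigma| * lam sigma ^ (q + 1)) * lam sigma ^ -1 and use
  sum_sigma lam sigma ^ -2 = prod_k (1 + (k + 1) ^ -2) <= exp (pi^2 / 6).\<close>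

lemma lam_ge_1: "1 \<le> lam \<sigma>"
  unfolding lam_def by (intro prod_ge_1) auto

lemma Suc_elem_le_lam:
  assumes "finite \<sigma>" "k \<in> \<sigma>"
  shows "real (Suc k) \<le> lam \<sigma>"
proof -
  have "lam \<sigma> = real (Suc k) * lam (\<sigma> - {k})"
    using assms unfolding lam_def by (simp add: prod.remove)
  with lam_ge_1[of "\<sigma> - {k}"] show ?thesis
    by (simp add: mult_le_cancel_left1)
qed

lemma card_le_lam:
  assumes "finite \<sigma>"
  shows "real (card \<sigma>) \<le> lam \<sigma>"
proof (cases "\<sigma> = {}")
  case True
  then show ?thesis using lam_ge_1[of \<sigma>] by simp
next
  case False
  have "card \<sigma> \<le> card {..Max \<sigma>}"
    using assms by (intro card_mono) auto
  also have "\<dots> = Suc (Max \<sigma>)" by simp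
  finally show ?thesis
    using Suc_elem_le_lam[OF assms Max_in[OF assms False]] by linarith
qed

lemma sum_inverse_lam_squared_le: "(\<Sum>\<sigma>\<in>Pow {..<m}. 1 / lam \<sigma> ^ 2) \<le> exp (pi\<^sup>2 / 6)"
proof -
  have inv_sq_sum: "(\<lambda>k. 1 / real ((k + 1)\<^sup>2)) sums (pi\<^sup>2 / 6)"
    by (rule inverse_squares_sums)
  have "(\<Sum>\<sigma>\<in>Pow {..<m}. 1 / lam \<sigma> ^ 2)
      = (\<Sum>\<sigma>\<in>Pow {..<m}. (\<Prod>k\<in>\<sigma>. 1 / real ((k + 1)\<^sup>2)) * (\<Prod>k\<in>{..<m} - \<sigma>. 1))"
    by (simp add: lam_def prod_power_distrib prod_dividef)
  also have "\<dots> = (\<Prod>k<m. 1 / real ((k + 1)\<^sup>2) + 1)"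
    by (rule prod_add[symmetric]) simp
  also have "\<dots> \<le> (\<Prod>k<m. exp (1 / real ((k + 1)\<^sup>2)))"
    by (intro prod_mono) (auto simp: add.commute[of _ 1] exp_ge_add_one_self)
  also have "\<dots> = exp (\<Sum>k<m. 1 / real ((k + 1)\<^sup>2))"
    by (simp add: exp_sum)
  also have "\<dots> \<le> exp (pi\<^sup>2 / 6)"
    using sum_le_suminf[OF sums_summable[OF inv_sq_sum], of "{..<m}"] sums_unique[OF inv_sq_sum]
    by simp
  finally show ?thesis .
qed

lemma Pow_lessThan_subset_Gam: "Pow {..<m} \<subseteq> Gam"
  by (auto simp: Gam_def intro: finite_subset)

lemma tendsto_Pow_lessThan_finite_subsets:
  "filterlim (\<lambda>m. Pow {..<m}) (finite_subsets_at_top Gam) sequentially"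
  unfolding filterlim_finite_subsets_at_top
proof (intro allI impI)
  fix X assume X: "finite X \<and> X \<subseteq> Gam"
  then have "finite (\<Union>X)" by (auto simp: Gam_def)
  then obtain M where M: "\<And>k. k \<in> \<Union>X \<Longrightarrow> k < M"
    using finite_nat_iff_bounded[of "\<Union>X"] by (auto simp: subset_eq)
  show "\<forall>\<^sub>F m in sequentially. finite (Pow {..<m}) \<and> X \<subseteq> Pow {..<m} \<and> Pow {..<m} \<subseteq> Gam"
    unfolding eventually_sequentially
  proof (intro exI[of _ M] allI impI conjI)
    fix m assume "M \<le> m"
    then show "X \<subseteq> Pow {..<m}" using M by fastforce
  qed (auto simp: Pow_lessThan_subset_Gam)
qed

lemma Stest_finite_support:
  assumes "finite S" "S \<subseteq> Gam" "\<And>\<sigma>. \<sigma> \<notin> S \<Longrightarrow> \<xi> \<sigma> = 0"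
  shows "\<xi> \<in> Stest"
  unfolding Stest_def
proof (intro CollectI conjI allI impI)
  fix \<sigma> assume "\<sigma> \<notin> Gam"
  then show "\<xi> \<sigma> = 0" using assms by auto
next
  fix p :: nat
  let ?f = "\<lambda>\<sigma>. lam \<sigma> ^ (2 * p) * (cmod (\<xi> \<sigma>))\<^sup>2"
  have "?f summable_on Gam \<longleftrightarrow> ?f summable_on S"
    by (rule summable_on_cong_neutral) (use assms in auto)
  then show "?f summable_on Gam" using assms(1) by simp
qed

lemma Zb_in_Stest: "\<sigma> \<in> Gam \<Longrightarrow> Zb \<sigma> \<in> Stest"
  by (rule Stest_finite_support[of "{\<sigma>}"]) (auto simp: Zb_def)

lemma Stest_norm_le:
  assumes "\<xi> \<in> Stest" "\<And>\<sigma>. cmod (\<eta> \<sigma>) \<le> cmod (\<xi> \<sigma>)" "\<And>\<sigma>. \<sigma> \<notin> Gam \<Longrightarrow> \<eta> \<sigma> = 0"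
  shows "\<eta> \<in> Stest"
  unfolding Stest_def
proof (intro CollectI conjI allI impI)
  fix \<sigma> assume "\<sigma> \<notin> Gam"
  then show "\<eta> \<sigma> = 0" using assms by auto
next
  fix p :: nat
  have "(\<lambda>\<sigma>. lam \<sigma> ^ (2 * p) * (cmod (\<xi> \<sigma>))\<^sup>2) summable_on Gam"
    using assms(1) unfolding Stest_def by auto
  then show "(\<lambda>\<sigma>. lam \<sigma> ^ (2 * p) * (cmod (\<eta> \<sigma>))\<^sup>2) summable_on Gam"
  proof (rule summable_on_comparison_test)
    fix \<sigma>
    have "0 \<le> lam \<sigma> ^ (2 * p)" using lam_ge_1[of \<sigma>] by simp
    then show "lam \<sigma> ^ (2 * p) * (cmod (\<eta> \<sigma>))\<^sup>2 \<le> lam \<sigma> ^ (2 * p) * (cmod (\<xi> \<sigma>))\<^sup>2"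
      and "0 \<le> lam \<sigma> ^ (2 * p) * (cmod (\<eta> \<sigma>))\<^sup>2"
      using assms(2)[of \<sigma>] by (simp_all add: mult_left_mono power_mono)
  qed
qed

lemma pnorm_nonneg: "0 \<le> pnorm p \<xi>"
  unfolding pnorm_def
  by (intro real_sqrt_ge_zero infsum_nonneg mult_nonneg_nonneg zero_le_power)
    (auto intro: order_trans[OF zero_le_one lam_ge_1])

lemma pnorm_mono:
  assumes "\<xi> \<in> Stest" "p \<le> q"
  shows "pnorm p \<xi> \<le> pnorm q \<xi>"
  unfolding pnorm_def
proof (intro real_sqrt_le_mono infsum_mono)
  have "\<forall>r. (\<lambda>\<sigma>. lam \<sigma> ^ (2 * r) * (cmod (\<xi> \<sigma>))\<^sup>2) summable_on Gam"
    using assms(1) unfolding Stest_def by blast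
  then show "(\<lambda>\<sigma>. lam \<sigma> ^ (2 * p) * (cmod (\<xi> \<sigma>))\<^sup>2) summable_on Gam"
    and "(\<lambda>\<sigma>. lam \<sigma> ^ (2 * q) * (cmod (\<xi> \<sigma>))\<^sup>2) summable_on Gam"
    by blast+
  show "lam \<sigma> ^ (2 * p) * (cmod (\<xi> \<sigma>))\<^sup>2 \<le> lam \<sigma> ^ (2 * q) * (cmod (\<xi> \<sigma>))\<^sup>2" for \<sigma>
    using assms(2) lam_ge_1[of \<sigma>] by (intro mult_right_mono power_increasing) auto
qed

lemma pnorm_Zb:
  assumes "\<sigma> \<in> Gam"
  shows "pnorm p (Zb \<sigma>) = lam \<sigma> ^ p"
proof -
  have "(\<Sum>\<^sub>\<infinity>\<tau>\<in>Gam. lam \<tau> ^ (2 * p) * (cmod (Zb \<sigma> \<tau>))\<^sup>2)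
      = (\<Sum>\<^sub>\<infinity>\<tau>\<in>{\<sigma>}. lam \<tau> ^ (2 * p) * (cmod (Zb \<sigma> \<tau>))\<^sup>2)"
    by (rule infsum_cong_neutral) (use assms in \<open>auto simp: Zb_def\<close>)
  also have "\<dots> = (lam \<sigma> ^ p)\<^sup>2"
    by (simp add: Zb_def power_mult[symmetric] mult.commute)
  finally show ?thesis
    using lam_ge_1[of \<sigma>] by (simp add: pnorm_def)
qed

lemma sum_Pow_le_pnorm:
  assumes "\<xi> \<in> Stest"
  shows "(\<Sum>\<sigma>\<in>Pow {..<m}. lam \<sigma> ^ (2 * p) * (cmod (\<xi> \<sigma>))\<^sup>2) \<le> (pnorm p \<xi>)\<^sup>2"
proof -
  define f where "f \<sigma> = lam \<sigma> ^ (2 * p) * (cmod (\<xi> \<sigma>))\<^sup>2" for \<sigma>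
  have f_summable: "f summable_on Gam"
    using assms unfolding Stest_def f_def by auto
  have f_nonneg: "0 \<le> f \<sigma>" for \<sigma>
    using lam_ge_1[of \<sigma>] by (simp add: f_def)
  have "sum f (Pow {..<m}) = infsum f (Pow {..<m})" by simp
  also have "\<dots> \<le> infsum f Gam"
    by (rule infsum_mono_neutral) (use f_summable f_nonneg Pow_lessThan_subset_Gam in auto)
  also have "\<dots> = (pnorm p \<xi>)\<^sup>2"
    unfolding pnorm_def f_def[symmetric] using infsum_nonneg[of Gam f] f_nonneg by simp
  finally show ?thesis unfolding f_def .
qed

lemma pnorm_tail_tendsto_0:
  assumes "\<xi> \<in> Stest"
  shows "(\<lambda>m. pnorm p (\<lambda>\<tau>. if \<tau> \<in> Pow {..<m} then 0 else \<xi> \<tau>)) \<longlonglongrightarrow> 0"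
proof -
  define f where "f \<sigma> = lam \<sigma> ^ (2 * p) * (cmod (\<xi> \<sigma>))\<^sup>2" for \<sigma>
  have f_summable: "f summable_on Gam"
    using assms unfolding Stest_def f_def by auto
  then have "(\<lambda>m. sum f (Pow {..<m})) \<longlonglongrightarrow> infsum f Gam"
    unfolding summable_iff_has_sum_infsum has_sum_def
    by (rule filterlim_compose[OF _ tendsto_Pow_lessThan_finite_subsets])
  then have "(\<lambda>m. sqrt (infsum f Gam - sum f (Pow {..<m}))) \<longlonglongrightarrow> sqrt (infsum f Gam - infsum f Gam)"
    by (intro tendsto_intros)
  moreover have "pnorm p (\<lambda>\<tau>. if \<tau> \<in> Pow {..<m} then 0 else \<xi> \<tau>)
      = sqrt (infsum f Gam - sum f (Pow {..<m}))" for m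
  proof -
    have "(\<Sum>\<^sub>\<infinity>\<sigma>\<in>Gam. lam \<sigma> ^ (2 * p) * (cmod (if \<sigma> \<in> Pow {..<m} then 0 else \<xi> \<sigma>))\<^sup>2)
          = infsum f (Gam - Pow {..<m})"
      by (rule infsum_cong_neutral) (auto simp: f_def)
    also have "\<dots> = infsum f Gam - infsum f (Pow {..<m})"
      by (rule infsum_Diff[OF f_summable]) (auto simp: Pow_lessThan_subset_Gam)
    finally show ?thesis unfolding pnorm_def by simp
  qed
  ultimately show ?thesis by simp
qed

lemma sum_Pow_weighted_le_pnorm:
  assumes "\<xi> \<in> Stest"
  shows "(\<Sum>\<sigma>\<in>Pow {..<m}. cmod (\<xi> \<sigma>) * lam \<sigma> ^ q)
           \<le> ((pnorm (Suc q) \<xi>)\<^sup>2 + exp (pi\<^sup>2 / 6)) / 2"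
proof -
  have am_gm: "cmod (\<xi> \<sigma>) * lam \<sigma> ^ q
      \<le> (lam \<sigma> ^ (2 * Suc q) * (cmod (\<xi> \<sigma>))\<^sup>2 + 1 / lam \<sigma> ^ 2) / 2" for \<sigma>
  proof -
    define x L where "x = cmod (\<xi> \<sigma>) * lam \<sigma> ^ Suc q" and "L = lam \<sigma>"
    have "L \<noteq> 0" using lam_ge_1[of \<sigma>] by (simp add: L_def)
    then have "cmod (\<xi> \<sigma>) * lam \<sigma> ^ q = x * (1 / L)"
      by (simp add: x_def L_def)
    also have "\<dots> \<le> (x\<^sup>2 + (1 / L)\<^sup>2) / 2"
      using sum_squares_bound[of x "1 / L"] by (simp add: mult.commute)
    also have "\<dots> = (lam \<sigma> ^ (2 * Suc q) * (cmod (\<xi> \<sigma>))\<^sup>2 + 1 / lam \<sigma> ^ 2) / 2"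
      by (simp add: x_def L_def power_mult_distrib power_even_eq power_one_over power2_eq_square)
    finally show ?thesis .
  qed
  have "(\<Sum>\<sigma>\<in>Pow {..<m}. cmod (\<xi> \<sigma>) * lam \<sigma> ^ q)
      \<le> (\<Sum>\<sigma>\<in>Pow {..<m}. (lam \<sigma> ^ (2 * Suc q) * (cmod (\<xi> \<sigma>))\<^sup>2 + 1 / lam \<sigma> ^ 2) / 2)"
    by (rule sum_mono) (rule am_gm)
  also have "\<dots> = ((\<Sum>\<sigma>\<in>Pow {..<m}. lam \<sigma> ^ (2 * Suc q) * (cmod (\<xi> \<sigma>))\<^sup>2)
          + (\<Sum>\<sigma>\<in>Pow {..<m}. 1 / lam \<sigma> ^ 2)) / 2"
    by (simp add: sum.distrib sum_divide_distrib[symmetric])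
  also have "\<dots> \<le> ((pnorm (Suc q) \<xi>)\<^sup>2 + exp (pi\<^sup>2 / 6)) / 2"
    by (intro divide_right_mono add_mono sum_Pow_le_pnorm assms sum_inverse_lam_squared_le) simp
  finally show ?thesis .
qed

lemma Sstar_add:
  "\<Psi> \<in> Sstar \<Longrightarrow> \<xi> \<in> Stest \<Longrightarrow> \<eta> \<in> Stest \<Longrightarrow> \<Psi> (\<lambda>\<sigma>. \<xi> \<sigma> + \<eta> \<sigma>) = \<Psi> \<xi> + \<Psi> \<eta>"
  unfolding Sstar_def by blast

lemma Sstar_scale: "\<Psi> \<in> Sstar \<Longrightarrow> \<xi> \<in> Stest \<Longrightarrow> \<Psi> (\<lambda>\<sigma>. c * \<xi> \<sigma>) = c * \<Psi> \<xi>"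
  unfolding Sstar_def by blast

lemma Sstar_bounded:
  assumes "\<Psi> \<in> Sstar"
  obtains C p where "0 \<le> C" "\<And>\<xi>. \<xi> \<in> Stest \<Longrightarrow> cmod (\<Psi> \<xi>) \<le> C * pnorm p \<xi>"
proof -
  from assms obtain p C where C: "\<forall>\<xi>\<in>Stest. cmod (\<Psi> \<xi>) \<le> C * pnorm p \<xi>"
    unfolding Sstar_def by blast
  have "cmod (\<Psi> \<xi>) \<le> max C 0 * pnorm p \<xi>" if "\<xi> \<in> Stest" for \<xi>
    using C that pnorm_nonneg[of p \<xi>] by (meson max.cobounded1 mult_right_mono order_trans)
  then show ?thesis by (intro that[of "max C 0" p]) auto
qed

lemma Sstar_zero: "(\<lambda>\<xi>. 0) \<in> Sstar"
  unfolding Sstar_def by (auto intro!: exI[of _ "0::nat"] exI[of _ "0::real"])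

lemma Sstar_add_scaled:
  assumes "\<Phi> \<in> Sstar" "\<Psi> \<in> Sstar"
  shows "(\<lambda>\<xi>. c * \<Phi> \<xi> + \<Psi> \<xi>) \<in> Sstar"
proof -
  obtain C p where C: "0 \<le> C" "\<And>\<xi>. \<xi> \<in> Stest \<Longrightarrow> cmod (\<Phi> \<xi>) \<le> C * pnorm p \<xi>"
    using Sstar_bounded[OF assms(1)] by metis
  obtain D q where D: "0 \<le> D" "\<And>\<xi>. \<xi> \<in> Stest \<Longrightarrow> cmod (\<Psi> \<xi>) \<le> D * pnorm q \<xi>"
    using Sstar_bounded[OF assms(2)] by metis
  have bound: "cmod (c * \<Phi> \<xi> + \<Psi> \<xi>) \<le> (cmod c * C + D) * pnorm (max p q) \<xi>"
    if \<xi>: "\<xi> \<in> Stest" for \<xi>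
  proof -
    have "cmod (c * \<Phi> \<xi> + \<Psi> \<xi>) \<le> cmod c * cmod (\<Phi> \<xi>) + cmod (\<Psi> \<xi>)"
      using norm_triangle_ineq[of "c * \<Phi> \<xi>" "\<Psi> \<xi>"] by (simp add: norm_mult)
    also have "\<dots> \<le> cmod c * (C * pnorm (max p q) \<xi>) + D * pnorm (max p q) \<xi>"
      using C D pnorm_mono[OF \<xi>, of p "max p q"] pnorm_mono[OF \<xi>, of q "max p q"]
      by (intro add_mono mult_left_mono order_trans[OF C(2)[OF \<xi>]] order_trans[OF D(2)[OF \<xi>]]) auto
    finally show ?thesis by (simp add: algebra_simps)
  qed
  show ?thesis
    unfolding Sstar_def
  proof (intro CollectI conjI allI impI)
    fix \<xi> \<eta> assume \<xi>: "\<xi> \<in> Stest" and \<eta>: "\<eta> \<in> Stest"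
    show "c * \<Phi> (\<lambda>\<sigma>. \<xi> \<sigma> + \<eta> \<sigma>) + \<Psi> (\<lambda>\<sigma>. \<xi> \<sigma> + \<eta> \<sigma>)
        = (c * \<Phi> \<xi> + \<Psi> \<xi>) + (c * \<Phi> \<eta> + \<Psi> \<eta>)"
      unfolding Sstar_add[OF assms(1) \<xi> \<eta>] Sstar_add[OF assms(2) \<xi> \<eta>] by (simp add: algebra_simps)
  next
    fix d \<xi> assume \<xi>: "\<xi> \<in> Stest"
    show "c * \<Phi> (\<lambda>\<sigma>. d * \<xi> \<sigma>) + \<Psi> (\<lambda>\<sigma>. d * \<xi> \<sigma>) = d * (c * \<Phi> \<xi> + \<Psi> \<xi>)"
      unfolding Sstar_scale[OF assms(1) \<xi>] Sstar_scale[OF assms(2) \<xi>] by (simp add: algebra_simps)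
  next
    show "\<exists>p C. \<forall>\<xi>\<in>Stest. cmod (c * \<Phi> \<xi> + \<Psi> \<xi>) \<le> C * pnorm p \<xi>"
      using bound by (intro exI ballI)
  next
    fix \<xi> assume "\<xi> \<notin> Stest"
    then have "\<Phi> \<xi> = 0" "\<Psi> \<xi> = 0"
      using assms unfolding Sstar_def by blast+
    then show "c * \<Phi> \<xi> + \<Psi> \<xi> = 0" by simp
  qed
qed

lemma Sstar_sum:
  assumes "finite I" "\<And>i. i \<in> I \<Longrightarrow> \<Phi> i \<in> Sstar"
  shows "(\<lambda>\<xi>. \<Sum>i\<in>I. c i * \<Phi> i \<xi>) \<in> Sstar"
  using assms by (induction I rule: finite_induct) (auto intro: Sstar_zero Sstar_add_scaled)

lemma Sstar_restrict_finite:
  assumes "\<Psi> \<in> Sstar" "finite S" "S \<subseteq> Gam"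
  shows "\<Psi> (\<lambda>\<tau>. if \<tau> \<in> S then \<xi> \<tau> else 0) = (\<Sum>\<sigma>\<in>S. \<xi> \<sigma> * fock \<Psi> \<sigma>)"
  using assms(2,3)
proof (induction S rule: finite_induct)
  case empty
  have "(\<lambda>\<tau>. 0) \<in> Stest" by (rule Stest_finite_support[of "{}"]) auto
  from Sstar_scale[OF assms(1) this, of 0] show ?case by simp
next
  case (insert x S)
  let ?rest = "\<lambda>\<tau>. if \<tau> \<in> S then \<xi> \<tau> else 0"
  have x: "x \<in> Gam" using insert.prems by blast
  have "(\<lambda>\<tau>. \<xi> x * Zb x \<tau>) \<in> Stest"
    by (rule Stest_finite_support[of "{x}"]) (use x in \<open>auto simp: Zb_def\<close>)
  moreover have "?rest \<in> Stest"
    by (rule Stest_finite_support[of S]) (use insert in auto)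
  moreover have "(\<lambda>\<tau>. if \<tau> \<in> insert x S then \<xi> \<tau> else 0) = (\<lambda>\<tau>. \<xi> x * Zb x \<tau> + ?rest \<tau>)"
    using insert.hyps(2) by (auto simp: Zb_def)
  ultimately have "\<Psi> (\<lambda>\<tau>. if \<tau> \<in> insert x S then \<xi> \<tau> else 0) = \<xi> x * fock \<Psi> x + \<Psi> ?rest"
    using Sstar_add[OF assms(1)] Sstar_scale[OF assms(1) Zb_in_Stest[OF x]] by (simp add: fock_def)
  with insert show ?case by simp
qed

lemma fock_expansion:
  assumes "\<Psi> \<in> Sstar" "\<xi> \<in> Stest"
  shows "(\<lambda>m. \<Sum>\<sigma>\<in>Pow {..<m}. \<xi> \<sigma> * fock \<Psi> \<sigma>) \<longlonglongrightarrow> \<Psi> \<xi>"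
proof -
  obtain C p where "0 \<le> C" and C: "\<And>\<eta>. \<eta> \<in> Stest \<Longrightarrow> cmod (\<Psi> \<eta>) \<le> C * pnorm p \<eta>"
    using Sstar_bounded[OF assms(1)] by metis
  define tail where "tail m = (\<lambda>\<tau>. if \<tau> \<in> Pow {..<m} then 0 else \<xi> \<tau>)" for m
  have tail_Stest: "tail m \<in> Stest" for m
    by (rule Stest_norm_le[OF assms(2)]) (use assms(2) in \<open>auto simp: tail_def Stest_def\<close>)
  have split: "(\<Sum>\<sigma>\<in>Pow {..<m}. \<xi> \<sigma> * fock \<Psi> \<sigma>) = \<Psi> \<xi> - \<Psi> (tail m)" for m
  proof -
    let ?head = "\<lambda>\<tau>. if \<tau> \<in> Pow {..<m} then \<xi> \<tau> else 0"
    have "?head \<in> Stest"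
      by (rule Stest_finite_support[of "Pow {..<m}"]) (auto simp: Pow_lessThan_subset_Gam)
    moreover have "\<xi> = (\<lambda>\<tau>. ?head \<tau> + tail m \<tau>)" by (auto simp: tail_def)
    ultimately have "\<Psi> \<xi> = \<Psi> ?head + \<Psi> (tail m)"
      using Sstar_add[OF assms(1) _ tail_Stest] by metis
    then show ?thesis
      using Sstar_restrict_finite[OF assms(1) _ Pow_lessThan_subset_Gam] by simp
  qed
  have "(\<lambda>m. \<Psi> (tail m)) \<longlonglongrightarrow> 0"
  proof (rule Lim_null_comparison)
    show "\<forall>\<^sub>F m in sequentially. norm (\<Psi> (tail m)) \<le> C * pnorm p (tail m)"
      using C tail_Stest by auto
    show "(\<lambda>m. C * pnorm p (tail m)) \<longlonglongrightarrow> 0"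
      unfolding tail_def by (intro tendsto_mult_right_zero pnorm_tail_tendsto_0 assms(2))
  qed
  from tendsto_diff[OF tendsto_const[of "\<Psi> \<xi>"] this] show ?thesis
    unfolding split by simp
qed

lemma fock_bounded:
  assumes "\<Psi> \<in> Sstar"
  obtains C p where "0 \<le> C" "\<And>\<sigma>. \<sigma> \<in> Gam \<Longrightarrow> cmod (fock \<Psi> \<sigma>) \<le> C * lam \<sigma> ^ p"
proof -
  obtain C p where "0 \<le> C" and C: "\<And>\<xi>. \<xi> \<in> Stest \<Longrightarrow> cmod (\<Psi> \<xi>) \<le> C * pnorm p \<xi>"
    using Sstar_bounded[OF assms] by metis
  moreover have "cmod (fock \<Psi> \<sigma>) \<le> C * lam \<sigma> ^ p" if "\<sigma> \<in> Gam" for \<sigma>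
    using C[OF Zb_in_Stest[OF that]] pnorm_Zb[OF that] by (simp add: fock_def)
  ultimately show ?thesis using that by metis
qed

lemma norm_diff_le_if_fock_diff_le:
  assumes \<Phi>: "\<Phi> \<in> Sstar" and \<Psi>: "\<Psi> \<in> Sstar" and \<xi>: "\<xi> \<in> Stest" and "0 \<le> \<epsilon>"
    and fock_diff: "\<And>\<sigma>. \<sigma> \<in> Gam \<Longrightarrow> cmod (fock \<Phi> \<sigma> - fock \<Psi> \<sigma>) \<le> \<epsilon> * lam \<sigma> ^ q"
  shows "cmod (\<Phi> \<xi> - \<Psi> \<xi>) \<le> \<epsilon> * ((pnorm (Suc q) \<xi>)\<^sup>2 + exp (pi\<^sup>2 / 6)) / 2"
proof (rule LIMSEQ_le_const2)
  have "(\<lambda>m. (\<Sum>\<sigma>\<in>Pow {..<m}. \<xi> \<sigma> * fock \<Phi> \<sigma>) - (\<Sum>\<sigma>\<in>Pow {..<m}. \<xi> \<sigma> * fock \<Psi> \<sigma>))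
      \<longlonglongrightarrow> \<Phi> \<xi> - \<Psi> \<xi>"
    by (intro tendsto_diff fock_expansion \<Phi> \<Psi> \<xi>)
  then show "(\<lambda>m. cmod (\<Sum>\<sigma>\<in>Pow {..<m}. \<xi> \<sigma> * (fock \<Phi> \<sigma> - fock \<Psi> \<sigma>))) \<longlonglongrightarrow> cmod (\<Phi> \<xi> - \<Psi> \<xi>)"
    by (intro tendsto_norm) (simp add: sum_subtractf right_diff_distrib)
  show "\<exists>N. \<forall>m\<ge>N. cmod (\<Sum>\<sigma>\<in>Pow {..<m}. \<xi> \<sigma> * (fock \<Phi> \<sigma> - fock \<Psi> \<sigma>))
      \<le> \<epsilon> * ((pnorm (Suc q) \<xi>)\<^sup>2 + exp (pi\<^sup>2 / 6)) / 2"
  proof (intro exI allI impI)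
    fix m
    have "cmod (\<Sum>\<sigma>\<in>Pow {..<m}. \<xi> \<sigma> * (fock \<Phi> \<sigma> - fock \<Psi> \<sigma>))
        \<le> (\<Sum>\<sigma>\<in>Pow {..<m}. cmod (\<xi> \<sigma>) * (\<epsilon> * lam \<sigma> ^ q))"
      using Pow_lessThan_subset_Gam
      by (intro order_trans[OF norm_sum] sum_mono) (auto simp: norm_mult intro!: mult_left_mono fock_diff)
    also have "\<dots> = \<epsilon> * (\<Sum>\<sigma>\<in>Pow {..<m}. cmod (\<xi> \<sigma>) * lam \<sigma> ^ q)"
      by (simp add: sum_distrib_left mult.left_commute)
    also have "\<dots> \<le> \<epsilon> * ((pnorm (Suc q) \<xi>)\<^sup>2 + exp (pi\<^sup>2 / 6)) / 2"
      using mult_left_mono[OF sum_Pow_weighted_le_pnorm[OF \<xi>] \<open>0 \<le> \<epsilon>\<close>] by simp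
    finally show "cmod (\<Sum>\<sigma>\<in>Pow {..<m}. \<xi> \<sigma> * (fock \<Phi> \<sigma> - fock \<Psi> \<sigma>))
        \<le> \<epsilon> * ((pnorm (Suc q) \<xi>)\<^sup>2 + exp (pi\<^sup>2 / 6)) / 2" .
  qed
qed

lemma strong_conv_if_fock_diff_le:
  assumes F: "\<And>n. F n \<in> Sstar" and \<Psi>: "\<Psi> \<in> Sstar" and \<epsilon>: "\<epsilon> \<longlonglongrightarrow> 0"
    and fock_diff: "\<And>n \<sigma>. \<sigma> \<in> Gam \<Longrightarrow> cmod (fock (F n) \<sigma> - fock \<Psi> \<sigma>) \<le> \<epsilon> n * lam \<sigma> ^ q"
  shows "strong_conv F \<Psi>"
  unfolding strong_conv_def
proof (intro allI impI)
  fix B and e :: real assume B: "bounded_test B" and "0 < e"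
  obtain D where D: "\<And>\<xi>. \<xi> \<in> B \<Longrightarrow> pnorm (Suc q) \<xi> \<le> D"
    using B unfolding bounded_test_def by blast
  define K where "K = (D\<^sup>2 + exp (pi\<^sup>2 / 6)) / 2"
  have \<epsilon>_nonneg: "0 \<le> \<epsilon> n" for n
    using order_trans[OF norm_ge_zero fock_diff[of "{}" n]] by (simp add: Gam_def lam_def)
  have diff_le: "cmod (F n \<xi> - \<Psi> \<xi>) \<le> \<epsilon> n * K" if "\<xi> \<in> B" for n \<xi>
  proof -
    have "\<xi> \<in> Stest" using B \<open>\<xi> \<in> B\<close> by (auto simp: bounded_test_def)
    then have "cmod (F n \<xi> - \<Psi> \<xi>) \<le> \<epsilon> n * ((pnorm (Suc q) \<xi>)\<^sup>2 + exp (pi\<^sup>2 / 6)) / 2"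
      by (intro norm_diff_le_if_fock_diff_le F \<Psi> \<epsilon>_nonneg fock_diff)
    also have "\<dots> \<le> \<epsilon> n * K"
      using power_mono[OF D[OF that] pnorm_nonneg, of 2] \<epsilon>_nonneg[of n]
      unfolding K_def by (simp add: mult_left_mono)
    finally show ?thesis .
  qed
  have "(\<lambda>n. \<epsilon> n * K) \<longlonglongrightarrow> 0"
    using \<epsilon> by (rule tendsto_mult_left_zero)
  then have "\<forall>\<^sub>F n in sequentially. \<epsilon> n * K < e"
    using \<open>0 < e\<close> by (rule order_tendstoD)
  then show "\<forall>\<^sub>F n in sequentially. \<forall>\<xi>\<in>B. cmod (F n \<xi> - \<Psi> \<xi>) < e"
    by eventually_elim (use diff_le in \<open>auto intro: order_le_less_trans\<close>)
qed

lemma fock_create_annihilate: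
  assumes annihilate: "\<forall>\<sigma>\<in>Gam. fock A \<sigma> = (if k \<in> \<sigma> then 0 else fock \<Phi> (insert k \<sigma>))"
    and create: "\<forall>\<sigma>\<in>Gam. fock B \<sigma> = (if k \<in> \<sigma> then fock A (\<sigma> - {k}) else 0)"
    and \<sigma>: "\<sigma> \<in> Gam"
  shows "fock B \<sigma> = (if k \<in> \<sigma> then fock \<Phi> \<sigma> else 0)"
proof -
  have "\<sigma> - {k} \<in> Gam" using \<sigma> by (simp add: Gam_def)
  then show ?thesis
    using annihilate create \<sigma> by (simp add: insert_absorb)
qed

lemma cnt_split_lessThan:
  assumes "finite \<sigma>"
  shows "cnt u \<sigma> = (\<Sum>k<n. if k \<in> \<sigma> then u k else 0) + (\<Sum>k\<in>\<sigma> - {..<n}. u k)"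
proof -
  have "(\<Sum>k<n. if k \<in> \<sigma> then u k else 0) = (\<Sum>k\<in>\<sigma> \<inter> {..<n}. u k)"
    by (simp add: sum.inter_restrict[symmetric] Int_commute)
  then show ?thesis
    using sum.Int_Diff[OF assms, of u "{..<n}"] by (simp add: cnt_def)
qed

lemma sum_tail_le_lam:
  assumes "finite \<sigma>" "\<And>k. 0 \<le> u k" "\<And>k. u k \<le> U"
  shows "(\<Sum>k\<in>\<sigma> - {..<n}. u k) \<le> U * (lam \<sigma>)\<^sup>2 / real (Suc n)"
proof -
  have U: "0 \<le> U" using assms(2,3) order_trans by blast
  show ?thesis
  proof (cases "\<sigma> - {..<n} = {}")
    case True
    show ?thesis unfolding True using U by simp
  next
    case False
    then obtain k where k: "k \<in> \<sigma>" "n \<le> k"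
      by (meson Diff_eq_empty_iff lessThan_iff not_le subsetI)
    have n_le: "real (Suc n) \<le> lam \<sigma>"
      using Suc_elem_le_lam[OF assms(1) k(1)] k(2) by simp
    have "(\<Sum>k\<in>\<sigma> - {..<n}. u k) \<le> real (card (\<sigma> - {..<n})) * U"
      using sum_bounded_above[of "\<sigma> - {..<n}" u U] assms(3) by simp
    also have "\<dots> \<le> lam \<sigma> * U"
      using card_mono[of \<sigma> "\<sigma> - {..<n}"] card_le_lam[OF assms(1)] assms(1) U
      by (intro mult_right_mono) auto
    also have "\<dots> \<le> U * (lam \<sigma>)\<^sup>2 / real (Suc n)"
      using mult_left_mono[OF n_le, of "lam \<sigma> * U"] U lam_ge_1[of \<sigma>]
      by (simp add: field_simps power2_eq_square)
    finally show ?thesis .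
  qed
qed

lemma norm_partial_number_minus_number_le:
  assumes "finite \<sigma>" "\<And>k. 0 \<le> u k" "\<And>k. u k \<le> U" "0 \<le> C" "cmod z \<le> C * lam \<sigma> ^ p"
  shows "cmod ((\<Sum>k<n. complex_of_real (u k) * (if k \<in> \<sigma> then z else 0)) - complex_of_real (cnt u \<sigma>) * z)
           \<le> U * C / real (Suc n) * lam \<sigma> ^ (p + 2)"
proof -
  have "(\<Sum>k<n. complex_of_real (u k) * (if k \<in> \<sigma> then z else 0))
      = complex_of_real (\<Sum>k<n. if k \<in> \<sigma> then u k else 0) * z"
    by (auto simp: sum_distrib_right intro!: sum.cong)
  then have "(\<Sum>k<n. complex_of_real (u k) * (if k \<in> \<sigma> then z else 0)) - complex_of_real (cnt u \<sigma>) * z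
      = - complex_of_real (\<Sum>k\<in>\<sigma> - {..<n}. u k) * z"
    using cnt_split_lessThan[OF assms(1), of u n] by (simp add: algebra_simps)
  also have "cmod \<dots> = (\<Sum>k\<in>\<sigma> - {..<n}. u k) * cmod z"
    using assms(2) by (simp add: norm_mult sum_nonneg del: of_real_sum)
  also have "\<dots> \<le> U * (lam \<sigma>)\<^sup>2 / real (Suc n) * (C * lam \<sigma> ^ p)"
    using assms order_trans[OF assms(2) assms(3)]
    by (intro mult_mono sum_tail_le_lam) (auto simp: sum_nonneg)
  finally show ?thesis by (simp add: power_add power2_eq_square field_simps)
qed

theorem theorem3p9:
  fixes u :: "nat \<Rightarrow> real"
    and N :: "gfun \<Rightarrow> gfun"
    and a adag :: "nat \<Rightarrow> gfun \<Rightarrow> gfun"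
  assumes u_nonneg: "\<forall>k. u k \<ge> 0"
    and u_bdd: "\<exists>C. \<forall>k. u k \<le> C"
    and N_maps: "\<forall>\<Phi>\<in>Sstar. N \<Phi> \<in> Sstar"
    and N_fock: "\<forall>\<Phi>\<in>Sstar. \<forall>\<sigma>\<in>Gam. fock (N \<Phi>) \<sigma> = complex_of_real (cnt u \<sigma>) * fock \<Phi> \<sigma>"
    and a_maps: "\<forall>k. \<forall>\<Phi>\<in>Sstar. a k \<Phi> \<in> Sstar"
    and a_fock: "\<forall>k. \<forall>\<Phi>\<in>Sstar. \<forall>\<sigma>\<in>Gam.
                   fock (a k \<Phi>) \<sigma> = (if k \<in> \<sigma> then 0 else fock \<Phi> (insert k \<sigma>))"
    and adag_maps: "\<forall>k. \<forall>\<Phi>\<in>Sstar. adag k \<Phi> \<in> Sstar"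
    and adag_fock: "\<forall>k. \<forall>\<Phi>\<in>Sstar. \<forall>\<sigma>\<in>Gam.
                   fock (adag k \<Phi>) \<sigma> = (if k \<in> \<sigma> then fock \<Phi> (\<sigma> - {k}) else 0)"
    and Phi: "\<Phi> \<in> Sstar"
  shows "strong_conv (\<lambda>n. \<lambda>\<xi>. \<Sum>k<n. complex_of_real (u k) * adag k (a k \<Phi>) \<xi>) (N \<Phi>)"
proof -
  obtain U where U: "\<And>k. u k \<le> U" using u_bdd by blast
  obtain C p where "0 \<le> C" and C: "\<And>\<sigma>. \<sigma> \<in> Gam \<Longrightarrow> cmod (fock \<Phi> \<sigma>) \<le> C * lam \<sigma> ^ p"
    using fock_bounded[OF Phi] by metis
  define F where "F n = (\<lambda>\<xi>. \<Sum>k<n. complex_of_real (u k) * adag k (a k \<Phi>) \<xi>)" for n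
  have "F n \<in> Sstar" for n
    unfolding F_def using Phi a_maps adag_maps by (intro Sstar_sum) auto
  moreover have "N \<Phi> \<in> Sstar"
    using N_maps Phi by blast
  moreover have "(\<lambda>n. U * C / real (Suc n)) \<longlonglongrightarrow> 0"
    by (rule LIMSEQ_Suc[OF lim_const_over_n])
  moreover have "cmod (fock (F n) \<sigma> - fock (N \<Phi>) \<sigma>) \<le> U * C / real (Suc n) * lam \<sigma> ^ (p + 2)"
    if \<sigma>: "\<sigma> \<in> Gam" for n \<sigma>
  proof -
    have number_term: "fock (adag k (a k \<Phi>)) \<sigma> = (if k \<in> \<sigma> then fock \<Phi> \<sigma> else 0)" for k
      by (rule fock_create_annihilate) (use a_fock adag_fock a_maps Phi \<sigma> in auto)
    have "fock (F n) \<sigma> = (\<Sum>k<n. complex_of_real (u k) * fock (adag k (a k \<Phi>)) \<sigma>)"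
      by (simp add: F_def fock_def)
    also have "\<dots> = (\<Sum>k<n. complex_of_real (u k) * (if k \<in> \<sigma> then fock \<Phi> \<sigma> else 0))"
      by (simp add: number_term)
    finally have F_fock: "fock (F n) \<sigma> = \<dots>" .
    have N_fock_\<sigma>: "fock (N \<Phi>) \<sigma> = complex_of_real (cnt u \<sigma>) * fock \<Phi> \<sigma>"
      using N_fock Phi \<sigma> by blast
    show ?thesis
      unfolding F_fock N_fock_\<sigma>
      by (rule norm_partial_number_minus_number_le) (use \<sigma> u_nonneg U \<open>0 \<le> C\<close> C in \<open>auto simp: Gam_def\<close>)
  qed
  ultimately show ?thesis
    unfolding F_def[symmetric] by (rule strong_conv_if_fock_diff_le)
qed

end
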